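(* Let $y_1,y_2,y_3>0$ with $y_1=4y_2y_3$, let $g=y_1Q|_{\mathfrak m_1}+y_2Q|_{\mathfrak m_2}+y_3Q|_{\mathfrak m_3}$ with orthonormal basis $X_1,\dots,X_7$, and consider the $\mathrm{SO}(5)$-invariant tensors on $V^{5,2}$ given by $\xi=X_1$, $\eta=X^1$, and the endomorphism $\Phi$ of $\mathfrak m$ with $\Phi X_1=0$, $\Phi X_i=-X_{i+3}$, $\Phi X_{i+3}=X_i$ for $i=2,3,4$. Then $(\eta,\xi,g,\Phi)$, which is a contact metric structure, is a Sasakian structure if and only if $y_1=4y_2^2$ and $y_2=y_3$.
   Context: Basis of $\mathfrak{so}(5)$ (with $E_{ij}$ the elementary $5\times5$ matrices): $e_1=E_{12}-E_{21}$, $e_2=E_{13}-E_{31}$, $e_3=E_{14}-E_{41}$, $e_4=E_{15}-E_{51}$, $e_5=E_{23}-E_{32}$, $e_6=E_{24}-E_{42}$, $e_7=E_{25}-E_{52}$, $e_8=E_{34}-E_{43}$, $e_9=E_{35}-E_{53}$, $e_{10}=E_{54}-E_{45}$; bracket = commutator. $V^{5,2}=\mathrm{SO}(5)/\mathrm{SO}(3)$ with $\mathrm{Lie}(\mathrm{SO}(3))=\mathrm{span}\{e_8,e_9,e_{10}\}$; $\mathfrak m=\mathrm{span}\{e_1,\dots,e_7\}$ is identified with the tangent space at the origin and invariant tensors with $\mathrm{Ad}(\mathrm{SO}(3))$-invariant tensors on $\mathfrak m$. $Q(A,B)=\frac12\mathrm{tr}(AB^T)$; $\mathfrak m_1=\mathrm{span}\{e_1\}$,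 $\mathfrak m_2=\mathrm{span}\{e_2,e_3,e_4\}$, $\mathfrak m_3=\mathrm{span}\{e_5,e_6,e_7\}$, mutually $g$-orthogonal. $X_1=e_1/\sqrt{y_1}$, $X_i=e_i/\sqrt{y_2}$ ($i=2,3,4$), $X_i=e_i/\sqrt{y_3}$ ($i=5,6,7$), with dual coframe $X^i$. A contact metric structure $(\eta,\xi,g,\Phi)$ satisfies $\eta\wedge(d\eta)^3\neq0$, $\eta(\xi)=1$, $\Phi^2=-I+\eta\otimes\xi$, $g(\Phi X,\Phi Y)=g(X,Y)-\eta(X)\eta(Y)$, $d\eta(X,Y)=2g(X,\Phi Y)$. It is Sasakian if it is normal, i.e. the Nijenhuis tensor $N_\Phi(X,Y)=[\Phi X,\Phi Y]+\Phi^2[X,Y]-\Phi[\Phi X,Y]-\Phi[X,\Phi Y]$ satisfies $N_\Phi=-d\eta\otimes\xi$. *)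

theory Defs
  imports Complex_Main "HOL-Combinatorics.Permutations"
begin

text \<open>5x5 real matrices, indexed by 1..5 (entries outside this range are irrelevant and
  are zero for all matrices built below).\<close>
type_synonym mat = "nat \<Rightarrow> nat \<Rightarrow> real"

definition mzero :: mat where "mzero = (\<lambda>i j. 0)"
definition madd :: "mat \<Rightarrow> mat \<Rightarrow> mat" where "madd A B = (\<lambda>i j. A i j + B i j)"
definition msub :: "mat \<Rightarrow> mat \<Rightarrow> mat" where "msub A B = (\<lambda>i j. A i j - B i j)"
definition msc :: "real \<Rightarrow> mat \<Rightarrow> mat" where "msc c A = (\<lambda>i j. c * A i j)"
definition mmul :: "mat \<Rightarrow> mat \<Rightarrow> mat" where
  "mmul A B = (\<lambda>i j. \<Sum>k\<in>{1..5}. A i k * B k j)"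
definition mtrans :: "mat \<Rightarrow> mat" where "mtrans A = (\<lambda>i j. A j i)"
definition mtrace :: "mat \<Rightarrow> real" where "mtrace A = (\<Sum>i\<in>{1..5}. A i i)"

definition Eij :: "nat \<Rightarrow> nat \<Rightarrow> mat" where
  "Eij p q = (\<lambda>i j. if i = p \<and> j = q then 1 else 0)"

definition commut :: "mat \<Rightarrow> mat \<Rightarrow> mat" where
  "commut A B = msub (mmul A B) (mmul B A)"

definition so5_e :: "nat \<Rightarrow> mat" where
  "so5_e k =
    (if k = 1 then msub (Eij 1 2) (Eij 2 1)
     else if k = 2 then msub (Eij 1 3) (Eij 3 1)
     else if k = 3 then msub (Eij 1 4) (Eij 4 1)
     else if k = 4 then msub (Eij 1 5) (Eij 5 1)
     else if k = 5 then msub (Eij 2 3) (Eij 3 2)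
     else if k = 6 then msub (Eij 2 4) (Eij 4 2)
     else if k = 7 then msub (Eij 2 5) (Eij 5 2)
     else if k = 8 then msub (Eij 3 4) (Eij 4 3)
     else if k = 9 then msub (Eij 3 5) (Eij 5 3)
     else if k = 10 then msub (Eij 5 4) (Eij 4 5)
     else mzero)"

definition Qf :: "mat \<Rightarrow> mat \<Rightarrow> real" where
  "Qf A B = mtrace (mmul A (mtrans B)) / 2"

text \<open>Q-orthogonal projection onto span of e_k, k in S (the e_k are Q-orthonormal).\<close>
definition proj_span :: "nat set \<Rightarrow> mat \<Rightarrow> mat" where
  "proj_span S A = (\<lambda>i j. \<Sum>k\<in>S. Qf A (so5_e k) * so5_e k i j)"

text \<open>m = span{e_1..e_7}, identified with the tangent space of V^{5,2} = SO(5)/SO(3)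
  at the origin; the reductive complement of so(3) = span{e_8,e_9,e_10}.\<close>
definition m_space :: "mat set" where
  "m_space = {A. \<exists>c :: nat \<Rightarrow> real. A = (\<lambda>i j. \<Sum>k\<in>{1..7}. c k * so5_e k i j)}"

definition proj_m :: "mat \<Rightarrow> mat" where "proj_m = proj_span {1..7}"

text \<open>The m-component of the Lie bracket, used to evaluate invariant tensors at the origin.\<close>
definition brm :: "mat \<Rightarrow> mat \<Rightarrow> mat" where "brm A B = proj_m (commut A B)"

definition g_met :: "real \<Rightarrow> real \<Rightarrow> real \<Rightarrow> mat \<Rightarrow> mat \<Rightarrow> real" where
  "g_met y1 y2 y3 A B =
     y1 * Qf (proj_span {1} A) (proj_span {1} B)
   + y2 * Qf (proj_span {2,3,4} A) (proj_span {2,3,4} B)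
   + y3 * Qf (proj_span {5,6,7} A) (proj_span {5,6,7} B)"

definition blk :: "real \<Rightarrow> real \<Rightarrow> real \<Rightarrow> nat \<Rightarrow> real" where
  "blk y1 y2 y3 k = (if k = 1 then y1 else if k \<in> {2,3,4} then y2 else y3)"

definition Xb :: "real \<Rightarrow> real \<Rightarrow> real \<Rightarrow> nat \<Rightarrow> mat" where
  "Xb y1 y2 y3 k = msc (1 / sqrt (blk y1 y2 y3 k)) (so5_e k)"

definition Xco :: "real \<Rightarrow> real \<Rightarrow> real \<Rightarrow> nat \<Rightarrow> mat \<Rightarrow> real" where
  "Xco y1 y2 y3 k A = sqrt (blk y1 y2 y3 k) * Qf A (so5_e k)"

definition Phi_img :: "real \<Rightarrow> real \<Rightarrow> real \<Rightarrow> nat \<Rightarrow> mat" where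
  "Phi_img y1 y2 y3 k =
     (if k \<in> {2,3,4} then msc (-1) (Xb y1 y2 y3 (k + 3))
      else if k \<in> {5,6,7} then Xb y1 y2 y3 (k - 3)
      else mzero)"

definition Phi_V :: "real \<Rightarrow> real \<Rightarrow> real \<Rightarrow> mat \<Rightarrow> mat" where
  "Phi_V y1 y2 y3 A = (\<lambda>i j. \<Sum>k\<in>{1..7}. Xco y1 y2 y3 k A * Phi_img y1 y2 y3 k i j)"

definition eta_V :: "real \<Rightarrow> real \<Rightarrow> real \<Rightarrow> mat \<Rightarrow> real" where
  "eta_V y1 y2 y3 = Xco y1 y2 y3 1"

definition xi_V :: "real \<Rightarrow> real \<Rightarrow> real \<Rightarrow> mat" where
  "xi_V y1 y2 y3 = Xb y1 y2 y3 1"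

text \<open>Exterior derivative of an invariant 1-form, evaluated at the origin, with the
  convention d eta(X,Y) = X eta(Y) - Y eta(X) - eta([X,Y]).\<close>
definition d_form :: "(mat \<Rightarrow> mat \<Rightarrow> mat) \<Rightarrow> (mat \<Rightarrow> real) \<Rightarrow> mat \<Rightarrow> mat \<Rightarrow> real" where
  "d_form br eta X Y = - eta (br X Y)"

text \<open>(eta \<and> (d eta)^3)(v_1,...,v_7), up to a nonzero normalising constant.\<close>
definition eta_wedge_deta3 ::
  "(mat \<Rightarrow> mat \<Rightarrow> mat) \<Rightarrow> (mat \<Rightarrow> real) \<Rightarrow> (nat \<Rightarrow> mat) \<Rightarrow> real" where
  "eta_wedge_deta3 br eta v =
     (\<Sum>p | p permutes {1..7}. of_int (sign p) * eta (v (p 1))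
        * d_form br eta (v (p 2)) (v (p 3))
        * d_form br eta (v (p 4)) (v (p 5))
        * d_form br eta (v (p 6)) (v (p 7)))"

definition contact_metric ::
  "mat set \<Rightarrow> (mat \<Rightarrow> mat \<Rightarrow> mat) \<Rightarrow> (mat \<Rightarrow> real) \<Rightarrow> mat \<Rightarrow> (mat \<Rightarrow> mat \<Rightarrow> real)
   \<Rightarrow> (mat \<Rightarrow> mat) \<Rightarrow> bool" where
  "contact_metric M br eta xi g Phi \<longleftrightarrow>
     (\<exists>v. (\<forall>i. v i \<in> M) \<and> eta_wedge_deta3 br eta v \<noteq> 0)
   \<and> xi \<in> M \<and> eta xi = 1
   \<and> (\<forall>X\<in>M. Phi X \<in> M \<and> Phi (Phi X) = madd (msc (-1) X) (msc (eta X) xi))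
   \<and> (\<forall>X\<in>M. \<forall>Y\<in>M. g (Phi X) (Phi Y) = g X Y - eta X * eta Y)
   \<and> (\<forall>X\<in>M. \<forall>Y\<in>M. d_form br eta X Y = 2 * g X (Phi Y))"

definition nijenhuis :: "(mat \<Rightarrow> mat \<Rightarrow> mat) \<Rightarrow> (mat \<Rightarrow> mat) \<Rightarrow> mat \<Rightarrow> mat \<Rightarrow> mat" where
  "nijenhuis br Phi X Y =
     msub (msub (madd (br (Phi X) (Phi Y)) (Phi (Phi (br X Y))))
                (Phi (br (Phi X) Y)))
          (Phi (br X (Phi Y)))"

definition normal_structure ::
  "mat set \<Rightarrow> (mat \<Rightarrow> mat \<Rightarrow> mat) \<Rightarrow> (mat \<Rightarrow> real) \<Rightarrow> mat \<Rightarrow> (mat \<Rightarrow> mat) \<Rightarrow> bool" where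
  "normal_structure M br eta xi Phi \<longleftrightarrow>
     (\<forall>X\<in>M. \<forall>Y\<in>M. nijenhuis br Phi X Y = msc (- d_form br eta X Y) xi)"

definition sasakian ::
  "mat set \<Rightarrow> (mat \<Rightarrow> mat \<Rightarrow> mat) \<Rightarrow> (mat \<Rightarrow> real) \<Rightarrow> mat \<Rightarrow> (mat \<Rightarrow> mat \<Rightarrow> real)
   \<Rightarrow> (mat \<Rightarrow> mat) \<Rightarrow> bool" where
  "sasakian M br eta xi g Phi \<longleftrightarrow>
     contact_metric M br eta xi g Phi \<and> normal_structure M br eta xi Phi"

end

theory Submission
  imports Defs
begin

(*
  In the coordinates c_1, ..., c_7 of m with respect to e_1, ..., e_7 every invariant tensor
  becomes explicit: eta = sqrt y1 e^1, the m-part of the bracket is a bilinear map with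
  d eta = sqrt y1 (e^2 /\ e^5 + e^3 /\ e^6 + e^4 /\ e^7), and Phi maps m_2 and m_3 onto each
  other, up to sign scaled by sqrt y2 / sqrt y3 and its inverse. Hence eta /\ (d eta)^3 is
  nonzero on the basis, and d eta(X, Y) = 2 g(X, Phi Y) holds exactly because
  sqrt y1 = 2 sqrt y2 sqrt y3. Normality does not involve g: N(e_1, e_2) = (1 - y2/y3) e_5
  while d eta(e_1, e_2) = 0, so normality forces y2 = y3; conversely, for y2 = y3 the map Phi
  is the standard complex structure on m_2 + m_3 and N = - d eta (x) xi componentwise.
*)

declare One_nat_def[simp del]

definition m_vec :: "(nat \<Rightarrow> real) \<Rightarrow> mat" where
  "m_vec c = (\<lambda>i j. \<Sum>k\<in>{1..7}. c k * so5_e k i j)"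

definition unit_vec :: "nat \<Rightarrow> nat \<Rightarrow> real" where
  "unit_vec i = (\<lambda>k. if k = i then 1 else 0)"

lemma atLeastAtMost_1_7: "{1..7::nat} = {1, 2, 3, 4, 5, 6, 7}" by auto
lemma atLeastAtMost_1_5: "{1..5::nat} = {1, 2, 3, 4, 5}" by auto

lemma atLeastAtMost_1_7_cases:
  "k \<in> {1..7::nat} \<Longrightarrow> k = 1 \<or> k = 2 \<or> k = 3 \<or> k = 4 \<or> k = 5 \<or> k = 6 \<or> k = 7"
  by auto

lemma so5_e_apply:
  "so5_e 1 i j = (if i = 1 \<and> j = 2 then 1 else if i = 2 \<and> j = 1 then -1 else 0)"
  "so5_e 2 i j = (if i = 1 \<and> j = 3 then 1 else if i = 3 \<and> j = 1 then -1 else 0)"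
  "so5_e 3 i j = (if i = 1 \<and> j = 4 then 1 else if i = 4 \<and> j = 1 then -1 else 0)"
  "so5_e 4 i j = (if i = 1 \<and> j = 5 then 1 else if i = 5 \<and> j = 1 then -1 else 0)"
  "so5_e 5 i j = (if i = 2 \<and> j = 3 then 1 else if i = 3 \<and> j = 2 then -1 else 0)"
  "so5_e 6 i j = (if i = 2 \<and> j = 4 then 1 else if i = 4 \<and> j = 2 then -1 else 0)"
  "so5_e 7 i j = (if i = 2 \<and> j = 5 then 1 else if i = 5 \<and> j = 2 then -1 else 0)"
  by (auto simp: so5_e_def msub_def Eij_def)

lemma m_vec_apply:
  "m_vec c i j = c 1 * so5_e 1 i j + c 2 * so5_e 2 i j + c 3 * so5_e 3 i j + c 4 * so5_e 4 i j
     + c 5 * so5_e 5 i j + c 6 * so5_e 6 i j + c 7 * so5_e 7 i j"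
  by (simp add: m_vec_def atLeastAtMost_1_7)

lemma m_vec_entries:
  "m_vec c 1 1 = 0"    "m_vec c 1 2 = c 1"   "m_vec c 1 3 = c 2"   "m_vec c 1 4 = c 3"
  "m_vec c 1 5 = c 4"  "m_vec c 2 1 = - c 1" "m_vec c 2 2 = 0"     "m_vec c 2 3 = c 5"
  "m_vec c 2 4 = c 6"  "m_vec c 2 5 = c 7"   "m_vec c 3 1 = - c 2" "m_vec c 3 2 = - c 5"
  "m_vec c 3 3 = 0"    "m_vec c 3 4 = 0"     "m_vec c 3 5 = 0"     "m_vec c 4 1 = - c 3"
  "m_vec c 4 2 = - c 6" "m_vec c 4 3 = 0"    "m_vec c 4 4 = 0"     "m_vec c 4 5 = 0"
  "m_vec c 5 1 = - c 4" "m_vec c 5 2 = - c 7" "m_vec c 5 3 = 0"    "m_vec c 5 4 = 0"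
  "m_vec c 5 5 = 0"
  by (simp_all add: m_vec_apply so5_e_apply)

lemma m_space_eq_range_m_vec: "m_space = range m_vec"
  unfolding m_space_def m_vec_def by auto

lemma Qf_eq_sum: "Qf A B = (\<Sum>i\<in>{1..5}. \<Sum>k\<in>{1..5}. A i k * B i k) / 2"
  by (simp add: Qf_def mtrace_def mmul_def mtrans_def)

lemma Qf_so5_e:
  "Qf A (so5_e 1) = (A 1 2 - A 2 1) / 2"
  "Qf A (so5_e 2) = (A 1 3 - A 3 1) / 2"
  "Qf A (so5_e 3) = (A 1 4 - A 4 1) / 2"
  "Qf A (so5_e 4) = (A 1 5 - A 5 1) / 2"
  "Qf A (so5_e 5) = (A 2 3 - A 3 2) / 2"
  "Qf A (so5_e 6) = (A 2 4 - A 4 2) / 2"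
  "Qf A (so5_e 7) = (A 2 5 - A 5 2) / 2"
  by (simp_all add: Qf_eq_sum atLeastAtMost_1_5 so5_e_apply)

lemma Qf_m_vec_so5_e: "k \<in> {1..7} \<Longrightarrow> Qf (m_vec c) (so5_e k) = c k"
  by (drule atLeastAtMost_1_7_cases) (elim disjE; simp add: Qf_so5_e m_vec_entries)

lemma Qf_m_vec_m_vec:
  "Qf (m_vec c) (m_vec d) = c 1 * d 1 + c 2 * d 2 + c 3 * d 3 + c 4 * d 4 + c 5 * d 5 + c 6 * d 6 + c 7 * d 7"
  by (simp add: Qf_eq_sum atLeastAtMost_1_5 m_vec_entries)

lemma m_vec_cong: "(\<And>k. k \<in> {1..7} \<Longrightarrow> c k = d k) \<Longrightarrow> m_vec c = m_vec d"
  unfolding m_vec_def by (intro ext sum.cong) auto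

lemma m_vec_eq_iff: "m_vec c = m_vec d \<longleftrightarrow> (\<forall>k\<in>{1..7}. c k = d k)"
  by (metis Qf_m_vec_so5_e m_vec_cong)

lemma madd_m_vec: "madd (m_vec c) (m_vec d) = m_vec (\<lambda>k. c k + d k)"
  by (simp add: madd_def m_vec_def sum.distrib[symmetric] distrib_right)

lemma msub_m_vec: "msub (m_vec c) (m_vec d) = m_vec (\<lambda>k. c k - d k)"
  by (simp add: msub_def m_vec_def sum_subtractf[symmetric] left_diff_distrib)

lemma msc_m_vec: "msc a (m_vec c) = m_vec (\<lambda>k. a * c k)"
  by (simp add: msc_def m_vec_def sum_distrib_left mult.assoc)

lemma so5_e_eq_m_vec: "k \<in> {1..7} \<Longrightarrow> so5_e k = m_vec (unit_vec k)"
proof (intro ext)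
  fix i j assume "k \<in> {1..7}"
  have "m_vec (unit_vec k) i j = (\<Sum>l\<in>{1..7}. if l = k then so5_e l i j else 0)"
    unfolding m_vec_def unit_vec_def by (rule sum.cong) simp_all
  also have "\<dots> = so5_e k i j"
    using \<open>k \<in> {1..7}\<close> by simp
  finally show "so5_e k i j = m_vec (unit_vec k) i j" ..
qed

lemma proj_span_eq_m_vec:
  "S \<subseteq> {1..7} \<Longrightarrow> proj_span S A = m_vec (\<lambda>k. if k \<in> S then Qf A (so5_e k) else 0)"
  unfolding proj_span_def m_vec_def
  by (intro ext sum.mono_neutral_cong_left) auto

definition m_bracket :: "(nat \<Rightarrow> real) \<Rightarrow> (nat \<Rightarrow> real) \<Rightarrow> nat \<Rightarrow> real" where
  "m_bracket c d k =
    (if k = 1 then c 5 * d 2 - c 2 * d 5 + c 6 * d 3 - c 3 * d 6 + c 7 * d 4 - c 4 * d 7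
     else if k = 2 then c 1 * d 5 - c 5 * d 1
     else if k = 3 then c 1 * d 6 - c 6 * d 1
     else if k = 4 then c 1 * d 7 - c 7 * d 1
     else if k = 5 then c 2 * d 1 - c 1 * d 2
     else if k = 6 then c 3 * d 1 - c 1 * d 3
     else if k = 7 then c 4 * d 1 - c 1 * d 4
     else 0)"

lemma brm_m_vec: "brm (m_vec c) (m_vec d) = m_vec (m_bracket c d)"
proof -
  have "brm (m_vec c) (m_vec d)
      = m_vec (\<lambda>k. if k \<in> {1..7} then Qf (commut (m_vec c) (m_vec d)) (so5_e k) else 0)"
    unfolding brm_def proj_m_def by (rule proj_span_eq_m_vec) simp
  also have "\<dots> = m_vec (m_bracket c d)"
    by (intro m_vec_cong, drule atLeastAtMost_1_7_cases, elim disjE)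
      (simp_all add: Qf_so5_e commut_def msub_def mmul_def atLeastAtMost_1_5 m_vec_entries
        m_bracket_def field_simps)
  finally show ?thesis .
qed

definition phi_coords :: "real \<Rightarrow> real \<Rightarrow> (nat \<Rightarrow> real) \<Rightarrow> nat \<Rightarrow> real" where
  "phi_coords a b c k =
    (if k \<in> {2, 3, 4} then b / a * c (k + 3) else if k \<in> {5, 6, 7} then - (a / b) * c (k - 3) else 0)"

lemma Phi_V_m_vec: "Phi_V y1 y2 y3 (m_vec c) = m_vec (phi_coords (sqrt y2) (sqrt y3) c)"
  by (intro ext) (simp add: Phi_V_def atLeastAtMost_1_7 Xco_def Qf_m_vec_so5_e blk_def Phi_img_def
      Xb_def msc_def mzero_def phi_coords_def m_vec_apply algebra_simps)

lemma eta_V_m_vec: "eta_V y1 y2 y3 (m_vec c) = sqrt y1 * c 1"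
  by (simp add: eta_V_def Xco_def Qf_m_vec_so5_e blk_def)

lemma xi_V_eq_m_vec: "xi_V y1 y2 y3 = m_vec (\<lambda>k. unit_vec 1 k / sqrt y1)"
  by (simp add: xi_V_def Xb_def blk_def so5_e_eq_m_vec msc_m_vec)

lemma g_met_m_vec:
  "g_met y1 y2 y3 (m_vec c) (m_vec d)
    = y1 * (c 1 * d 1) + y2 * (c 2 * d 2 + c 3 * d 3 + c 4 * d 4) + y3 * (c 5 * d 5 + c 6 * d 6 + c 7 * d 7)"
  by (simp add: g_met_def proj_span_eq_m_vec Qf_m_vec_so5_e Qf_m_vec_m_vec)

lemma d_form_m_vec: "d_form brm (eta_V y1 y2 y3) (m_vec c) (m_vec d) = - sqrt y1 * m_bracket c d 1"
  by (simp add: d_form_def brm_m_vec eta_V_m_vec)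

(*
  Expansion of a signed sum over the permutations of set xs along the image b of its least
  element a (cf. sum_over_permutations_insert). The predicate Z a f certifies that all terms
  below the current node vanish, so that the 7! terms of eta /\ (d eta)^3 need not all
  be enumerated.
*)
fun perm_expansion ::
  "(nat \<Rightarrow> (nat \<Rightarrow> nat) \<Rightarrow> bool) \<Rightarrow> ((nat \<Rightarrow> nat) \<Rightarrow> 'a::comm_ring_1) \<Rightarrow> nat list
   \<Rightarrow> (nat \<Rightarrow> nat) \<Rightarrow> 'a"
where
  "perm_expansion Z G [] f = G f"
| "perm_expansion Z G (a # xs) f =
     (\<Sum>b\<leftarrow>a # xs. if Z a (f \<circ> transpose a b) then 0
        else (if a = b then 1 else -1) * perm_expansion Z G xs (f \<circ> transpose a b))"

lemma sign_transpose_compose: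
  assumes "q permutes S" "finite S"
  shows "sign (transpose a b \<circ> q) = (if a = b then 1 else -1) * sign q"
proof -
  have "permutation q" using assms permutation_permutes by blast
  then show ?thesis by (simp add: sign_compose permutation_swap_id sign_swap_id)
qed

lemma sum_permutes_eq_perm_expansion:
  fixes G :: "(nat \<Rightarrow> nat) \<Rightarrow> 'a::comm_ring_1"
  assumes prune: "\<And>a f q. Z a f \<Longrightarrow> (\<And>j. j \<le> a \<Longrightarrow> q j = j) \<Longrightarrow> G (f \<circ> q) = 0"
    and "sorted_wrt (<) xs"
  shows "(\<Sum>q | q permutes set xs. of_int (sign q) * G (f \<circ> q)) = perm_expansion Z G xs f"
  using assms(2)
proof (induction xs arbitrary: f)
  case Nil
  then show ?case by simp
next
  case (Cons a xs)
  have a_notin: "a \<notin> set xs" and sorted: "sorted_wrt (<) xs"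
    using Cons.prems by auto
  have fixes_below_a: "q j = j" if "q permutes set xs" "j \<le> a" for q j
  proof -
    have "j \<notin> set xs" using Cons.prems that(2) by auto
    then show ?thesis by (rule permutes_not_in[OF that(1)])
  qed
  have step: "(\<Sum>q | q permutes set xs.
        of_int (sign (transpose a b \<circ> q)) * G (f \<circ> (transpose a b \<circ> q)))
    = (if Z a (f \<circ> transpose a b) then 0
       else (if a = b then 1 else -1) * perm_expansion Z G xs (f \<circ> transpose a b))" for b
  proof (cases "Z a (f \<circ> transpose a b)")
    case True
    then show ?thesis
      using prune[OF True] fixes_below_a by (simp add: o_assoc)
  next
    case False
    have "(\<Sum>q | q permutes set xs.
          of_int (sign (transpose a b \<circ> q)) * G (f \<circ> (transpose a b \<circ> q)))
      = (if a = b then 1 else -1)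
        * (\<Sum>q | q permutes set xs. of_int (sign q) * G (f \<circ> transpose a b \<circ> q))"
      unfolding sum_distrib_left
      by (intro sum.cong refl) (auto simp: sign_transpose_compose o_assoc)
    also have "\<dots> = (if a = b then 1 else -1) * perm_expansion Z G xs (f \<circ> transpose a b)"
      by (simp only: Cons.IH[OF sorted])
    finally show ?thesis
      by (simp only: False if_False)
  qed
  have "(\<Sum>q | q permutes set (a # xs). of_int (sign q) * G (f \<circ> q))
     = (\<Sum>b\<in>set (a # xs). \<Sum>q | q permutes set xs.
          of_int (sign (transpose a b \<circ> q)) * G (f \<circ> (transpose a b \<circ> q)))"
    using sum_over_permutations_insert[OF finite_set a_notin] by simp
  also have "\<dots> = (\<Sum>b\<in>set (a # xs). if Z a (f \<circ> transpose a b) then 0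
      else (if a = b then 1 else -1) * perm_expansion Z G xs (f \<circ> transpose a b))"
    by (simp only: step)
  also have "\<dots> = perm_expansion Z G (a # xs) f"
    unfolding perm_expansion.simps
    using Cons.prems a_notin by (intro sum_list_distinct_conv_sum_set[symmetric]) (simp add: strict_sorted_iff)
  finally show ?case .
qed

definition wedge_term :: "(nat \<Rightarrow> 'a::comm_ring_1) \<Rightarrow> (nat \<Rightarrow> nat \<Rightarrow> 'a) \<Rightarrow> (nat \<Rightarrow> nat) \<Rightarrow> 'a"
  where "wedge_term \<alpha> \<omega> p = \<alpha> (p 1) * \<omega> (p 2) (p 3) * \<omega> (p 4) (p 5) * \<omega> (p 6) (p 7)"

definition wedge_term_vanishes ::
  "(nat \<Rightarrow> 'a::comm_ring_1) \<Rightarrow> (nat \<Rightarrow> nat \<Rightarrow> 'a) \<Rightarrow> nat \<Rightarrow> (nat \<Rightarrow> nat) \<Rightarrow> bool"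
  where "wedge_term_vanishes \<alpha> \<omega> a f \<longleftrightarrow>
    a = 1 \<and> \<alpha> (f 1) = 0 \<or> a = 3 \<and> \<omega> (f 2) (f 3) = 0 \<or> a = 5 \<and> \<omega> (f 4) (f 5) = 0"

lemma wedge_term_vanishes_sound:
  "wedge_term_vanishes \<alpha> \<omega> a f \<Longrightarrow> (\<And>j. j \<le> a \<Longrightarrow> q j = j) \<Longrightarrow> wedge_term \<alpha> \<omega> (f \<circ> q) = 0"
  unfolding wedge_term_vanishes_def wedge_term_def by auto

lemma sum_permutes_wedge_term_eq_perm_expansion:
  "(\<Sum>p | p permutes {1..7::nat}. of_int (sign p) * wedge_term \<alpha> \<omega> p)
    = perm_expansion (wedge_term_vanishes \<alpha> \<omega>) (wedge_term \<alpha> \<omega>) [1, 2, 3, 4, 5, 6, 7] id"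
proof -
  have "{1..7::nat} = set [1, 2, 3, 4, 5, 6, 7]" by auto
  moreover have "(\<Sum>p | p permutes set [1, 2, 3, 4, 5, 6, 7::nat].
        of_int (sign p) * wedge_term \<alpha> \<omega> (id \<circ> p))
      = perm_expansion (wedge_term_vanishes \<alpha> \<omega>) (wedge_term \<alpha> \<omega>) [1, 2, 3, 4, 5, 6, 7] id"
    by (rule sum_permutes_eq_perm_expansion) (simp_all add: wedge_term_vanishes_sound)
  ultimately show ?thesis by simp
qed

lemma wedge_term_scale:
  "wedge_term (\<lambda>i. s * \<alpha> i) (\<lambda>i j. s * \<omega> i j) p = s ^ 4 * wedge_term \<alpha> \<omega> p"
  by (simp add: wedge_term_def power4_eq_xxxx ac_simps)

lemma eta_wedge_deta3_eq_sum_wedge_term: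
  "eta_wedge_deta3 br eta v
    = (\<Sum>p | p permutes {1..7}.
        of_int (sign p) * wedge_term (eta \<circ> v) (\<lambda>i j. d_form br eta (v i) (v j)) p)"
  unfolding eta_wedge_deta3_def wedge_term_def by (simp add: mult.assoc)

definition darboux_form :: "nat \<Rightarrow> nat \<Rightarrow> real" where
  "darboux_form i j =
    (if (i, j) \<in> {(2, 5), (3, 6), (4, 7)} then 1 else if (i, j) \<in> {(5, 2), (6, 3), (7, 4)} then -1 else 0)"

lemma sum_permutes_wedge_term_darboux:
  "(\<Sum>p | p permutes {1..7::nat}. of_int (sign p) * wedge_term (unit_vec 1) darboux_form p) = -48"
  unfolding sum_permutes_wedge_term_eq_perm_expansion
  by (simp add: wedge_term_vanishes_def wedge_term_def unit_vec_def darboux_form_def transpose_def)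

lemma eta_wedge_deta3_m_vec_unit_vec:
  "eta_wedge_deta3 brm (eta_V y1 y2 y3) (\<lambda>i. m_vec (unit_vec i)) = - 48 * sqrt y1 ^ 4"
proof -
  have eta: "eta_V y1 y2 y3 \<circ> (\<lambda>i. m_vec (unit_vec i)) = (\<lambda>i. sqrt y1 * unit_vec 1 i)"
    by (auto simp: eta_V_m_vec unit_vec_def)
  have deta: "(\<lambda>i j. d_form brm (eta_V y1 y2 y3) (m_vec (unit_vec i)) (m_vec (unit_vec j)))
      = (\<lambda>i j. sqrt y1 * darboux_form i j)"
    by (intro ext) (auto simp: d_form_m_vec m_bracket_def unit_vec_def darboux_form_def)
  have "eta_wedge_deta3 brm (eta_V y1 y2 y3) (\<lambda>i. m_vec (unit_vec i))
      = sqrt y1 ^ 4 * (\<Sum>p | p permutes {1..7}. of_int (sign p) * wedge_term (unit_vec 1) darboux_form p)"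
    unfolding eta_wedge_deta3_eq_sum_wedge_term eta deta wedge_term_scale
    by (simp add: sum_distrib_left mult.left_commute)
  then show ?thesis
    by (simp add: sum_permutes_wedge_term_darboux)
qed

lemma positive_real_is_square: "(y::real) > 0 \<Longrightarrow> \<exists>a>0. y = a\<^sup>2"
  by (intro exI[of _ "sqrt y"]) auto

lemma Phi_V_Phi_V:
  assumes "y1 > 0" "y2 > 0" "y3 > 0" "X \<in> m_space"
  shows "Phi_V y1 y2 y3 (Phi_V y1 y2 y3 X) = madd (msc (-1) X) (msc (eta_V y1 y2 y3 X) (xi_V y1 y2 y3))"
proof -
  obtain c where X: "X = m_vec c"
    using assms(4) unfolding m_space_eq_range_m_vec by blast
  show ?thesis
    unfolding X Phi_V_m_vec eta_V_m_vec xi_V_eq_m_vec msc_m_vec madd_m_vec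
    by (intro m_vec_cong, drule atLeastAtMost_1_7_cases, elim disjE)
      (use assms in \<open>simp_all add: phi_coords_def unit_vec_def\<close>)
qed

lemma g_met_Phi_V_Phi_V:
  assumes "y1 > 0" "y2 > 0" "y3 > 0" "X \<in> m_space" "Y \<in> m_space"
  shows "g_met y1 y2 y3 (Phi_V y1 y2 y3 X) (Phi_V y1 y2 y3 Y)
    = g_met y1 y2 y3 X Y - eta_V y1 y2 y3 X * eta_V y1 y2 y3 Y"
proof -
  obtain c d where "X = m_vec c" "Y = m_vec d"
    using assms(4,5) unfolding m_space_eq_range_m_vec by blast
  moreover obtain s a b where "s > 0" "a > 0" "b > 0" "y1 = s\<^sup>2" "y2 = a\<^sup>2" "y3 = b\<^sup>2"
    using assms(1-3) positive_real_is_square by meson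
  ultimately show ?thesis
    by (simp add: Phi_V_m_vec g_met_m_vec eta_V_m_vec phi_coords_def field_simps power2_eq_square)
qed

lemma d_form_eta_V_eq_g_met_Phi_V:
  assumes "y1 > 0" "y2 > 0" "y3 > 0" "y1 = 4 * y2 * y3" "X \<in> m_space" "Y \<in> m_space"
  shows "d_form brm (eta_V y1 y2 y3) X Y = 2 * g_met y1 y2 y3 X (Phi_V y1 y2 y3 Y)"
proof -
  obtain c d where X: "X = m_vec c" and Y: "Y = m_vec d"
    using assms(5,6) unfolding m_space_eq_range_m_vec by blast
  obtain a b where "a > 0" "b > 0" "y2 = a\<^sup>2" "y3 = b\<^sup>2"
    using assms(2,3) positive_real_is_square by meson
  moreover have "sqrt y1 = 2 * sqrt y2 * sqrt y3"
    using assms(4) by (simp add: real_sqrt_mult)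
  ultimately show ?thesis
    by (simp add: X Y Phi_V_m_vec g_met_m_vec d_form_m_vec m_bracket_def phi_coords_def
        field_simps power2_eq_square)
qed

lemma contact_metric_V52:
  assumes "y1 > 0" "y2 > 0" "y3 > 0" "y1 = 4 * y2 * y3"
  shows "contact_metric m_space brm (eta_V y1 y2 y3) (xi_V y1 y2 y3) (g_met y1 y2 y3) (Phi_V y1 y2 y3)"
proof -
  have "\<exists>v. (\<forall>i. v i \<in> m_space) \<and> eta_wedge_deta3 brm (eta_V y1 y2 y3) v \<noteq> 0"
    using assms(1) by (auto simp: m_space_eq_range_m_vec eta_wedge_deta3_m_vec_unit_vec
        intro!: exI[of _ "\<lambda>i. m_vec (unit_vec i)"])
  moreover have "xi_V y1 y2 y3 \<in> m_space" "eta_V y1 y2 y3 (xi_V y1 y2 y3) = 1"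
    using assms(1) by (simp_all add: m_space_eq_range_m_vec xi_V_eq_m_vec eta_V_m_vec unit_vec_def)
  moreover have "Phi_V y1 y2 y3 X \<in> m_space" if "X \<in> m_space" for X
    using that by (auto simp: m_space_eq_range_m_vec Phi_V_m_vec)
  ultimately show ?thesis
    unfolding contact_metric_def
    using Phi_V_Phi_V[OF assms(1-3)] g_met_Phi_V_Phi_V[OF assms(1-3)]
      d_form_eta_V_eq_g_met_Phi_V[OF assms] by simp
qed

lemma nijenhuis_Phi_V_m_vec:
  "nijenhuis brm (Phi_V y1 y2 y3) (m_vec c) (m_vec d) = m_vec (\<lambda>k.
      m_bracket (\<phi> c) (\<phi> d) k + \<phi> (\<phi> (m_bracket c d)) k
      - \<phi> (m_bracket (\<phi> c) d) k - \<phi> (m_bracket c (\<phi> d)) k)"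
  if "\<phi> = phi_coords (sqrt y2) (sqrt y3)"
  using that by (simp add: nijenhuis_def Phi_V_m_vec brm_m_vec madd_m_vec msub_m_vec)

lemma nijenhuis_Phi_V_e1_e2:
  assumes "y2 > 0" "y3 > 0"
  shows "nijenhuis brm (Phi_V y1 y2 y3) (m_vec (unit_vec 1)) (m_vec (unit_vec 2))
    = m_vec (\<lambda>k. (1 - y2 / y3) * unit_vec 5 k)"
proof -
  obtain a b where ab: "a > 0" "b > 0" "y2 = a\<^sup>2" "y3 = b\<^sup>2"
    using assms positive_real_is_square by meson
  show ?thesis
    unfolding nijenhuis_Phi_V_m_vec[OF refl]
    by (intro m_vec_cong, drule atLeastAtMost_1_7_cases, elim disjE)
      (use ab in \<open>simp_all add: m_bracket_def phi_coords_def unit_vec_def power2_eq_square\<close>)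
qed

lemma normal_structure_V52_iff:
  assumes "y1 > 0" "y2 > 0" "y3 > 0"
  shows "normal_structure m_space brm (eta_V y1 y2 y3) (xi_V y1 y2 y3) (Phi_V y1 y2 y3) \<longleftrightarrow> y2 = y3"
proof -
  have rhs: "msc (- d_form brm (eta_V y1 y2 y3) (m_vec c) (m_vec d)) (xi_V y1 y2 y3)
      = m_vec (\<lambda>k. m_bracket c d 1 * unit_vec 1 k)" for c d
    using assms(1) by (simp add: d_form_m_vec xi_V_eq_m_vec msc_m_vec)
  show ?thesis
  proof
    assume "normal_structure m_space brm (eta_V y1 y2 y3) (xi_V y1 y2 y3) (Phi_V y1 y2 y3)"
    then have "nijenhuis brm (Phi_V y1 y2 y3) (m_vec (unit_vec 1)) (m_vec (unit_vec 2))
        = msc (- d_form brm (eta_V y1 y2 y3) (m_vec (unit_vec 1)) (m_vec (unit_vec 2))) (xi_V y1 y2 y3)"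
      unfolding normal_structure_def m_space_eq_range_m_vec by blast
    then have "m_vec (\<lambda>k. (1 - y2 / y3) * unit_vec 5 k)
        = m_vec (\<lambda>k. m_bracket (unit_vec 1) (unit_vec 2) 1 * unit_vec 1 k)"
      unfolding rhs nijenhuis_Phi_V_e1_e2[OF assms(2,3)] .
    then have "1 - y2 / y3 = 0"
      unfolding m_vec_eq_iff by (auto dest: bspec[of _ _ 5] simp: m_bracket_def unit_vec_def)
    then show "y2 = y3"
      using assms(3) by simp
  next
    assume "y2 = y3"
    have "nijenhuis brm (Phi_V y1 y2 y3) (m_vec c) (m_vec d)
        = m_vec (\<lambda>k. m_bracket c d 1 * unit_vec 1 k)" for c d
      unfolding nijenhuis_Phi_V_m_vec[OF refl] \<open>y2 = y3\<close>
      by (intro m_vec_cong, drule atLeastAtMost_1_7_cases, elim disjE)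
        (use assms(3) in \<open>simp_all add: m_bracket_def phi_coords_def unit_vec_def algebra_simps\<close>)
    then show "normal_structure m_space brm (eta_V y1 y2 y3) (xi_V y1 y2 y3) (Phi_V y1 y2 y3)"
      unfolding normal_structure_def m_space_eq_range_m_vec by (auto simp: rhs)
  qed
qed

theorem theorem2p9:
  fixes y1 y2 y3 :: real
  assumes "y1 > 0" and "y2 > 0" and "y3 > 0" and "y1 = 4 * y2 * y3"
  shows "contact_metric m_space brm (eta_V y1 y2 y3) (xi_V y1 y2 y3)
            (g_met y1 y2 y3) (Phi_V y1 y2 y3)
       \<and> (sasakian m_space brm (eta_V y1 y2 y3) (xi_V y1 y2 y3)
            (g_met y1 y2 y3) (Phi_V y1 y2 y3)
          \<longleftrightarrow> y1 = 4 * y2 ^ 2 \<and> y2 = y3)"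
proof -
  have "y2 = y3 \<longleftrightarrow> y1 = 4 * y2 ^ 2 \<and> y2 = y3"
    using assms(4) by (auto simp: power2_eq_square)
  then show ?thesis
    using contact_metric_V52[OF assms] normal_structure_V52_iff[OF assms(1-3)]
    unfolding sasakian_def by blast
qed

end
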